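(* Let $X\in\mathfrak U$ and let $Y$ be a nonempty subspace of $X$. Then $Y\in\mathfrak U$.
   Context: For a metric space $(X,d)$, $\operatorname{Sp}(X)=\{d(x,y): x,y\in X,\ x\neq y\}$. $\mathfrak U$ denotes the class of finite ultrametric spaces $X$ with $|\operatorname{Sp}(X)|=|X|-1$. A subspace carries the restricted metric. *)

theory Defs
  imports Complex_Main
begin

definition metric_on :: "'a set \<Rightarrow> ('a \<Rightarrow> 'a \<Rightarrow> real) \<Rightarrow> bool" where
  "metric_on X d \<longleftrightarrow>
     (\<forall>x\<in>X. \<forall>y\<in>X. d x y \<ge> 0 \<and> (d x y = 0 \<longleftrightarrow> x = y) \<and> d x y = d y x) \<and>
     (\<forall>x\<in>X. \<forall>y\<in>X. \<forall>z\<in>X. d x z \<le> d x y + d y z)"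

definition ultrametric_on :: "'a set \<Rightarrow> ('a \<Rightarrow> 'a \<Rightarrow> real) \<Rightarrow> bool" where
  "ultrametric_on X d \<longleftrightarrow> metric_on X d \<and>
     (\<forall>x\<in>X. \<forall>y\<in>X. \<forall>z\<in>X. d x z \<le> max (d x y) (d y z))"

definition Sp :: "'a set \<Rightarrow> ('a \<Rightarrow> 'a \<Rightarrow> real) \<Rightarrow> real set" where
  "Sp X d = {d x y | x y. x \<in> X \<and> y \<in> X \<and> x \<noteq> y}"

definition classU :: "'a set \<Rightarrow> ('a \<Rightarrow> 'a \<Rightarrow> real) \<Rightarrow> bool" where
  "classU X d \<longleftrightarrow> finite X \<and> ultrametric_on X d \<and> int (card (Sp X d)) = int (card X) - 1"

end

theory Submission
  imports Defs
begin

text \<open>Adding one point z to a finite ultrametric space A creates at most one new distance: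
  if y0 is a point of A nearest to z, every strictly larger distance d z y is the base of an
  isosceles triangle and equals d y0 y, which already occurs in A. Hence by induction
  |Sp(A)| \<le> |A| - 1 for every nonempty finite ultrametric space, and adding the points of
  X - Y to Y one at a time shows |Sp(X)| \<le> |Sp(Y)| + |X - Y|. For X in U this forces
  equality |Sp(Y)| = |Y| - 1.\<close>

lemma ultrametric_on_subset:
  assumes "ultrametric_on X d" and "Y \<subseteq> X"
  shows "ultrametric_on Y d"
  using assms unfolding ultrametric_on_def metric_on_def by blast

lemma ultrametric_on_sym:
  assumes "ultrametric_on X d" and "x \<in> X" and "y \<in> X"
  shows "d x y = d y x"
  using assms unfolding ultrametric_on_def metric_on_def by blast

lemma ultrametric_on_isosceles:
  assumes U: "ultrametric_on X d" and X: "x \<in> X" "y \<in> X" "z \<in> X" and less: "d z x < d z y"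
  shows "d z y = d x y"
proof -
  have ult: "d a c \<le> max (d a b) (d b c)" if "a \<in> X" "b \<in> X" "c \<in> X" for a b c
    using U that unfolding ultrametric_on_def by blast
  have "d x y \<le> max (d z x) (d z y)"
    using ult[of x z y] X ultrametric_on_sym[OF U, of x z] by simp
  then have "d x y \<le> d z y" using less by simp
  have "d z y \<le> max (d z x) (d x y)" using ult X by blast
  then have "d z y \<le> d x y" using less by (simp add: le_max_iff_disj)
  with \<open>d x y \<le> d z y\<close> show ?thesis by simp
qed

lemma finite_Sp: "finite A \<Longrightarrow> finite (Sp A d)"
proof -
  assume "finite A"
  have "Sp A d \<subseteq> (\<lambda>(x, y). d x y) ` (A \<times> A)" unfolding Sp_def by auto
  with \<open>finite A\<close> show ?thesis by (meson finite_SigmaI finite_imageI finite_subset)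
qed

lemma Sp_insert_subset:
  assumes U: "ultrametric_on (insert z A) d" and A: "A \<noteq> {}" "finite A"
  shows "\<exists>r. Sp (insert z A) d \<subseteq> Sp A d \<union> {r}"
proof -
  have "Min (d z ` A) \<in> d z ` A" using A by (intro Min_in) auto
  then obtain y0 where y0: "y0 \<in> A" "d z y0 = Min (d z ` A)" by auto
  have nearest: "d z y0 \<le> d z y" if "y \<in> A" for y
    using y0 A that by auto
  have new_dist: "d z y \<in> Sp A d \<union> {d z y0}" if y: "y \<in> A" for y
  proof (cases "d z y0 < d z y")
    case True
    then have "d z y = d y0 y"
      using ultrametric_on_isosceles[OF U] y y0 by blast
    moreover have "y0 \<noteq> y" using True by auto
    ultimately show ?thesis using y y0 unfolding Sp_def by blast
  next
    case False
    then show ?thesis using nearest[OF y] by simp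
  qed
  have "Sp (insert z A) d \<subseteq> Sp A d \<union> {d z y0}"
  proof
    fix t assume "t \<in> Sp (insert z A) d"
    then obtain x y where t: "t = d x y" "x \<in> insert z A" "y \<in> insert z A" "x \<noteq> y"
      unfolding Sp_def by blast
    consider "x = z" | "y = z" | "x \<in> A" "y \<in> A" using t by blast
    then show "t \<in> Sp A d \<union> {d z y0}"
    proof cases
      case 1
      then show ?thesis using t new_dist by auto
    next
      case 2
      then have "x \<in> A" using t by auto
      moreover have "d x y = d z x"
        using 2 \<open>x \<in> A\<close> ultrametric_on_sym[OF U, of x z] by simp
      ultimately show ?thesis using new_dist t by simp
    next
      case 3
      then show ?thesis using t unfolding Sp_def by blast
    qed
  qed
  then show ?thesis by blast
qed

lemma card_Sp_insert_le:
  assumes "ultrametric_on (insert z A) d" and "A \<noteq> {}" and "finite A"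
  shows "card (Sp (insert z A) d) \<le> card (Sp A d) + 1"
proof -
  obtain r where r: "Sp (insert z A) d \<subseteq> Sp A d \<union> {r}"
    using Sp_insert_subset[OF assms] by blast
  have "card (Sp (insert z A) d) \<le> card (Sp A d \<union> {r})"
    using r finite_Sp[OF \<open>finite A\<close>] by (intro card_mono) auto
  also have "\<dots> \<le> card (Sp A d) + 1"
    using card_Un_le[of "Sp A d" "{r}"] by simp
  finally show ?thesis .
qed

lemma card_Sp_Un_le:
  assumes "ultrametric_on (A \<union> F) d" and "A \<noteq> {}" and "finite A" and "finite F"
  shows "card (Sp (A \<union> F) d) \<le> card (Sp A d) + card F"
  using \<open>finite F\<close> \<open>ultrametric_on (A \<union> F) d\<close>
proof (induction F rule: finite_induct)
  case empty
  then show ?case by simp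
next
  case (insert z F)
  have "card (Sp (insert z (A \<union> F)) d) \<le> card (Sp (A \<union> F) d) + 1"
    using insert.prems assms(2,3) insert.hyps(1) by (intro card_Sp_insert_le) auto
  moreover have "card (Sp (A \<union> F) d) \<le> card (Sp A d) + card F"
    using insert.IH insert.prems ultrametric_on_subset by blast
  ultimately show ?case using insert.hyps by simp
qed

lemma card_Sp_less_card:
  assumes "ultrametric_on A d" and "finite A" and "A \<noteq> {}"
  shows "card (Sp A d) < card A"
proof -
  obtain a where a: "a \<in> A" using assms(3) by blast
  have "Sp {a} d = {}" unfolding Sp_def by auto
  moreover have "{a} \<union> (A - {a}) = A" using a by blast
  ultimately have "card (Sp A d) \<le> card (A - {a})"
    using card_Sp_Un_le[of "{a}" "A - {a}" d] assms by auto
  also have "\<dots> < card A" using assms(2) a by (rule card_Diff1_less)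
  finally show ?thesis .
qed

theorem corollary9:
  fixes X Y :: "'a set" and d :: "'a \<Rightarrow> 'a \<Rightarrow> real"
  assumes "classU X d" and "Y \<subseteq> X" and "Y \<noteq> {}"
  shows "classU Y d"
proof -
  have fX: "finite X" and U: "ultrametric_on X d"
    and card_X: "int (card (Sp X d)) = int (card X) - 1"
    using assms(1) unfolding classU_def by auto
  have fY: "finite Y" using fX assms(2) finite_subset by blast
  have UY: "ultrametric_on Y d" using ultrametric_on_subset U assms(2) .
  have "Y \<union> (X - Y) = X" using assms(2) by blast
  then have "card (Sp X d) \<le> card (Sp Y d) + card (X - Y)"
    using card_Sp_Un_le[of Y "X - Y" d] U fX fY assms(3) by auto
  moreover have "card (X - Y) = card X - card Y" using fY assms(2) card_Diff_subset by blast
  moreover have "card Y \<le> card X" using fX assms(2) card_mono by blast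
  moreover have "card (Sp Y d) < card Y" using card_Sp_less_card UY fY assms(3) .
  ultimately have "int (card (Sp Y d)) = int (card Y) - 1" using card_X by linarith
  then show ?thesis using fY UY unfolding classU_def by auto
qed

end
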